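(* Let $\mathcal{I}$ be a proper admissible ideal on $\omega$ and $X$ a topological space. If ONE does not have a winning strategy in the $\mathcal{I}$-Hurewicz game $\mathcal{I}H(X)$, then $X$ satisfies $S_{fin}(\Lambda, \mathcal{I}\text{-}\mathcal{O}^{gp})$.
   Context: The game $\mathcal{I}H(X)$: in round $n\in\omega$ ONE chooses an open cover $\mathcal{U}_n$ of $X$ and TWO chooses a finite $\mathcal{V}_n\subseteq\mathcal{U}_n$; TWO wins if for each $x\in X$, $\{n : x\notin\bigcup\mathcal{V}_n\}\in\mathcal{I}$, otherwise ONE wins. $\Lambda$ denotes the collection of large covers of $X$ (open covers such that each point of $X$ belongs to infinitely many members). An open cover $\mathcal{U}$ is $\mathcal{I}$-groupable if $\mathcal{U}=\bigcup_n\mathcal{U}_n$ with the $\mathcal{U}_n$ finite, pairwise disjoint, and for each $x$, $\{n : x\notin\bigcup\mathcal{U}_n\}\in\mathcal{I}$; $\mathcal{I}\text{-}\mathcal{O}^{gp}$ is the collection of such covers. $S_{fin}(\Lambda,\mathcal{I}\text{-}\mathcal{O}^{gp})$: for each sequence $\langle\mathcal{U}_n\rangle$ of large covers there are finite $\mathcal{V}_n\subseteq\mathcal{U}_n$ with $\bigcup_n\mathcal{V}_n\in\mathcal{I}\text{-}\mathcal{O}^{gp}$. *)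

theory Defs
  imports "HOL-Analysis.Analysis"
begin

definition is_ideal :: "nat set set \<Rightarrow> bool" where
  "is_ideal I \<longleftrightarrow> {} \<in> I \<and> (\<forall>A B. A \<in> I \<and> B \<subseteq> A \<longrightarrow> B \<in> I)
     \<and> (\<forall>A B. A \<in> I \<and> B \<in> I \<longrightarrow> A \<union> B \<in> I)"

definition proper_ideal :: "nat set set \<Rightarrow> bool" where
  "proper_ideal I \<longleftrightarrow> is_ideal I \<and> UNIV \<notin> I"

definition admissible_ideal :: "nat set set \<Rightarrow> bool" where
  "admissible_ideal I \<longleftrightarrow> is_ideal I \<and> (\<forall>n. {n} \<in> I)"

definition open_cover :: "'a topology \<Rightarrow> 'a set set \<Rightarrow> bool" where
  "open_cover T \<U> \<longleftrightarrow> (\<forall>U\<in>\<U>. openin T U) \<and> topspace T \<subseteq> \<Union>\<U>"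

definition large_cover :: "'a topology \<Rightarrow> 'a set set \<Rightarrow> bool" where
  "large_cover T \<U> \<longleftrightarrow> open_cover T \<U> \<and> (\<forall>x\<in>topspace T. infinite {U\<in>\<U>. x \<in> U})"

definition I_groupable :: "nat set set \<Rightarrow> 'a topology \<Rightarrow> 'a set set \<Rightarrow> bool" where
  "I_groupable I T \<U> \<longleftrightarrow> open_cover T \<U> \<and>
     (\<exists>G :: nat \<Rightarrow> 'a set set. \<U> = (\<Union>n. G n) \<and> (\<forall>n. finite (G n))
        \<and> (\<forall>m n. m \<noteq> n \<longrightarrow> G m \<inter> G n = {})
        \<and> (\<forall>x\<in>topspace T. {n. x \<notin> \<Union>(G n)} \<in> I))"

definition S_fin_Lambda_IOgp :: "nat set set \<Rightarrow> 'a topology \<Rightarrow> bool" where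
  "S_fin_Lambda_IOgp I T \<longleftrightarrow>
     (\<forall>\<U> :: nat \<Rightarrow> 'a set set. (\<forall>n. large_cover T (\<U> n)) \<longrightarrow>
        (\<exists>\<V> :: nat \<Rightarrow> 'a set set. (\<forall>n. finite (\<V> n) \<and> \<V> n \<subseteq> \<U> n)
           \<and> I_groupable I T (\<Union>n. \<V> n)))"

text \<open>A strategy for ONE maps the finite sequence of TWO's
  previous moves to ONE's next move (an open cover).\<close>
definition strategy_ONE :: "'a topology \<Rightarrow> ('a set set list \<Rightarrow> 'a set set) \<Rightarrow> bool" where
  "strategy_ONE T \<sigma> \<longleftrightarrow> (\<forall>h. open_cover T (\<sigma> h))"

definition play_follows :: "('a set set list \<Rightarrow> 'a set set) \<Rightarrow> (nat \<Rightarrow> 'a set set) \<Rightarrow> bool" where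
  "play_follows \<sigma> \<V> \<longleftrightarrow> (\<forall>n. finite (\<V> n) \<and> \<V> n \<subseteq> \<sigma> (map \<V> [0..<n]))"

definition TWO_wins_play :: "nat set set \<Rightarrow> 'a topology \<Rightarrow> (nat \<Rightarrow> 'a set set) \<Rightarrow> bool" where
  "TWO_wins_play I T \<V> \<longleftrightarrow> (\<forall>x\<in>topspace T. {n. x \<notin> \<Union>(\<V> n)} \<in> I)"

definition ONE_has_winning_strategy_IH :: "nat set set \<Rightarrow> 'a topology \<Rightarrow> bool" where
  "ONE_has_winning_strategy_IH I T \<longleftrightarrow>
     (\<exists>\<sigma>. strategy_ONE T \<sigma> \<and> (\<forall>\<V>. play_follows \<sigma> \<V> \<longrightarrow> \<not> TWO_wins_play I T \<V>))"

end

theory Submission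
  imports Defs
begin

text \<open>Given large covers \<open>\<U> n\<close>, let ONE play in round \<open>n\<close> the cover \<open>\<U> n\<close> minus all sets
  TWO has chosen so far; removing finitely many members keeps a large cover a cover.
  A play against this strategy that TWO wins consists of pairwise disjoint finite
  selections \<open>\<V> n \<subseteq> \<U> n\<close>, which is exactly an \<open>I\<close>-grouping of their union; properness of
  \<open>I\<close> ensures that the union still covers the space.\<close>

lemma large_cover_imp_open_cover: "large_cover T \<U> \<Longrightarrow> open_cover T \<U>"
  by (simp add: large_cover_def)

lemma large_cover_Diff_finite:
  assumes "large_cover T \<U>" and "finite F"
  shows "large_cover T (\<U> - F)"
  unfolding large_cover_def open_cover_def
proof (intro conjI ballI subsetI)
  show "openin T U" if "U \<in> \<U> - F" for U
    using assms(1) that by (auto simp: large_cover_def open_cover_def)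
next
  fix x assume x: "x \<in> topspace T"
  have "infinite ({U\<in>\<U>. x \<in> U} - F)"
    using assms x by (simp add: large_cover_def Diff_infinite_finite)
  moreover have "{U\<in>\<U>. x \<in> U} - F = {U\<in>\<U> - F. x \<in> U}" by blast
  ultimately show "infinite {U\<in>\<U> - F. x \<in> U}" by simp
  then have "{U\<in>\<U> - F. x \<in> U} \<noteq> {}" by (metis finite.emptyI)
  then show "x \<in> \<Union>(\<U> - F)" by blast
qed

text \<open>Only the finite moves in the history are removed, so that the removed family is
  finite for every history, not just for those arising in a play.\<close>
definition avoiding_strategy :: "(nat \<Rightarrow> 'a set set) \<Rightarrow> 'a set set list \<Rightarrow> 'a set set" where
  "avoiding_strategy \<U> h = \<U> (length h) - \<Union>{W \<in> set h. finite W}"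

lemma strategy_ONE_avoiding_strategy:
  assumes "\<forall>n. large_cover T (\<U> n)"
  shows "strategy_ONE T (avoiding_strategy \<U>)"
  unfolding strategy_ONE_def avoiding_strategy_def
proof
  fix h :: "'a set set list"
  have "finite (\<Union>{W \<in> set h. finite W})" by (rule finite_Union) auto
  with assms show "open_cover T (\<U> (length h) - \<Union>{W \<in> set h. finite W})"
    by (simp add: large_cover_Diff_finite large_cover_imp_open_cover)
qed

lemma play_follows_avoiding_strategy:
  assumes "play_follows (avoiding_strategy \<U>) \<V>"
  shows "finite (\<V> n)" and "\<V> n \<subseteq> \<U> n - (\<Union>m<n. \<V> m)"
proof -
  have fin: "finite (\<V> k)" for k
    using assms by (simp add: play_follows_def)
  then have "{W \<in> set (map \<V> [0..<n]). finite W} = \<V> ` {..<n}" by auto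
  moreover have "\<V> n \<subseteq> avoiding_strategy \<U> (map \<V> [0..<n])"
    using assms by (simp add: play_follows_def)
  ultimately show "\<V> n \<subseteq> \<U> n - (\<Union>m<n. \<V> m)"
    by (simp add: avoiding_strategy_def)
  show "finite (\<V> n)" by (rule fin)
qed

lemma play_follows_avoiding_strategy_disjoint:
  assumes "play_follows (avoiding_strategy \<U>) \<V>" and "m \<noteq> n"
  shows "\<V> m \<inter> \<V> n = {}"
proof -
  have "\<V> k \<inter> \<V> l = {}" if "k < l" for k l
    using play_follows_avoiding_strategy(2)[OF assms(1), of l] that by blast
  with assms(2) show ?thesis by (metis inf_commute linorder_neqE_nat)
qed

lemma I_groupable_if_TWO_wins_play:
  assumes "proper_ideal I" and "TWO_wins_play I T \<V>"
    and "\<forall>U\<in>(\<Union>n. \<V> n). openin T U" and "\<forall>n. finite (\<V> n)"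
    and "\<forall>m n. m \<noteq> n \<longrightarrow> \<V> m \<inter> \<V> n = {}"
  shows "I_groupable I T (\<Union>n. \<V> n)"
  unfolding I_groupable_def
proof (intro conjI exI[of _ \<V>])
  have "x \<in> \<Union>(\<Union>n. \<V> n)" if "x \<in> topspace T" for x
  proof -
    have "{n. x \<notin> \<Union>(\<V> n)} \<noteq> UNIV"
      using assms(1,2) that by (auto simp: TWO_wins_play_def proper_ideal_def)
    then show ?thesis by auto
  qed
  with assms(3) show "open_cover T (\<Union>n. \<V> n)"
    by (auto simp: open_cover_def)
  show "\<forall>x\<in>topspace T. {n. x \<notin> \<Union>(\<V> n)} \<in> I"
    using assms(2) by (simp add: TWO_wins_play_def)
qed (use assms(4,5) in simp_all)

theorem mainTheorem2:
  fixes I :: "nat set set" and T :: "'a topology"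
  assumes "proper_ideal I" and "admissible_ideal I"
    and "\<not> ONE_has_winning_strategy_IH I T"
  shows "S_fin_Lambda_IOgp I T"
  unfolding S_fin_Lambda_IOgp_def
proof (intro allI impI)
  fix \<U> :: "nat \<Rightarrow> 'a set set"
  assume large: "\<forall>n. large_cover T (\<U> n)"
  obtain \<V> where play: "play_follows (avoiding_strategy \<U>) \<V>" and wins: "TWO_wins_play I T \<V>"
    using assms(3) strategy_ONE_avoiding_strategy[OF large]
    unfolding ONE_has_winning_strategy_IH_def by blast
  have sel: "finite (\<V> n) \<and> \<V> n \<subseteq> \<U> n" for n
    using play_follows_avoiding_strategy[OF play] by blast
  have "\<forall>U\<in>(\<Union>n. \<V> n). openin T U"
    using sel large by (fastforce simp: large_cover_def open_cover_def)
  then have "I_groupable I T (\<Union>n. \<V> n)"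
    using I_groupable_if_TWO_wins_play[OF assms(1) wins] sel
      play_follows_avoiding_strategy_disjoint[OF play] by blast
  with sel show "\<exists>\<V>. (\<forall>n. finite (\<V> n) \<and> \<V> n \<subseteq> \<U> n) \<and> I_groupable I T (\<Union>n. \<V> n)"
    by blast
qed

end
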